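(* Let $0<\delta<1$, $p=n^{\delta-1}$, let $H$ be a graph on $m=n^{\rho}$ vertices with $0<\rho<(1-\delta)/2$ and $m$ dividing $n$, let $k'\le m$, and let $6n^{1-\delta}\log n\le k-k'\le\frac{2n}{3}$. Then, for sufficiently large $n$, with probability at least $1-4/n$ over $G\sim G_H(n,p,k)$, every independent set of size $k$ in $G$ contains at least $k'$ vertices of the planted copy of $H$ (the set $M$).
   Context: $G(n,p)$ is the Erdős–Rényi random graph on $[n]$. With $H$ on vertex set $[m]$, partition $[n]$ into parts $P_i=\{(i-1)\frac nm+1,\dots,i\frac nm\}$. Distribution $G_H(n,p,k)$: sample $G'\sim G(n,p)$; choose a uniformly random $M=\{v_1,\dots,v_m\}$ with $v_i\in P_i$ and replace $G'[M]$ by a copy of $H$ with vertex $i$ at $v_i$, giving $G_H$; among the vertices with no neighbor in $M$ choose a uniformly random set $I'$ of size $k-k'$ and delete all edges inside $I'$ (if fewer than $k-k'$ such vertices exist, instead delete all edges inside a uniformly random set of $k$ vertices of $G_H$). *)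

theory Defs
  imports "HOL-Probability.Probability"
begin

text \<open>Simple graphs on a vertex set of natural numbers are represented by their edge sets:
  sets of 2-element sets of vertices.\<close>

definition all_pairs :: "nat set \<Rightarrow> nat set set" where
  "all_pairs V = {e. \<exists>a\<in>V. \<exists>b\<in>V. a \<noteq> b \<and> e = {a, b}}"

definition is_graph_on :: "nat set \<Rightarrow> nat set set \<Rightarrow> bool" where
  "is_graph_on V E \<longleftrightarrow> E \<subseteq> all_pairs V"

definition indep_set :: "nat set set \<Rightarrow> nat set \<Rightarrow> bool" where
  "indep_set E S \<longleftrightarrow> (\<forall>a\<in>S. \<forall>b\<in>S. {a, b} \<notin> E)"

definition gnp :: "nat \<Rightarrow> real \<Rightarrow> nat set set pmf" where
  "gnp n p = map_pmf (\<lambda>f. {e \<in> all_pairs {1..n}. f e})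
                     (Pi_pmf (all_pairs {1..n}) False (\<lambda>_. bernoulli_pmf p))"

definition part :: "nat \<Rightarrow> nat \<Rightarrow> nat \<Rightarrow> nat set" where
  "part n m i = {(i - 1) * (n div m) + 1 .. i * (n div m)}"

definition plant :: "nat \<Rightarrow> nat set set \<Rightarrow> (nat \<Rightarrow> nat) \<Rightarrow> nat set set \<Rightarrow> nat set set" where
  "plant m H v G' = {e \<in> G'. \<not> e \<subseteq> v ` {1..m}} \<union> (\<lambda>e. v ` e) ` H"

definition no_nbr_M :: "nat \<Rightarrow> nat set set \<Rightarrow> nat set \<Rightarrow> nat set" where
  "no_nbr_M n E M = {u \<in> {1..n} - M. \<forall>w\<in>M. {u, w} \<notin> E}"

definition GH :: "nat \<Rightarrow> real \<Rightarrow> nat \<Rightarrow> nat \<Rightarrow> nat set set \<Rightarrow> nat \<Rightarrow> (nat set set \<times> nat set) pmf" where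
  "GH n p k m H k' =
     bind_pmf (gnp n p) (\<lambda>G'.
     bind_pmf (Pi_pmf {1..m} 0 (\<lambda>i. pmf_of_set (part n m i))) (\<lambda>v.
       let M = v ` {1..m};
           E = plant m H v G';
           R = no_nbr_M n E M
       in bind_pmf
            (if k - k' \<le> card R then pmf_of_set {S. S \<subseteq> R \<and> card S = k - k'}
             else pmf_of_set {S. S \<subseteq> {1..n} \<and> card S = k})
            (\<lambda>I. return_pmf (E - {e. e \<subseteq> I}, M))))"

end

(* Condition on the planted positions, so that M is fixed, and split the edges of G(n,p) into
   the independent families of pairs meeting M and of pairs inside V = [n] - M.

   If fewer than K = k - k' vertices of V have no neighbour in M, then some n/4 vertices of V
   each have a neighbour in M; a union bound over these vertices and their neighbours bounds
   this by 2^n (m p)^(n/4) <= 1/n. Otherwise the set I whose inner edges are deleted is a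
   K-subset of V, and planting H does not change the pairs inside V.

   An independent k-set with fewer than k' vertices in M then contains a (K+1)-subset T of V
   that is independent in G(n,p)[V] minus the pairs inside I. With b = |T - I| >= 1, at least
   b K / 2 pairs of T meeting T - I are non-edges of G(n,p), which has probability at most
   (1 - p)^(b K / 2) <= n^(-3b) because p K >= 6 ln n. There are at most n^(2b-1) such T,
   so summing over T and b gives at most 1/n. *)

theory Submission
  imports Defs "HOL-Real_Asymp.Real_Asymp"
begin

lemma measure_bind_pmf:
  "measure_pmf.prob (bind_pmf M f) X = (\<integral>x. measure_pmf.prob (f x) X \<partial>M)"
proof -
  have "emeasure (measure_pmf (bind_pmf M f)) X = (\<integral>\<^sup>+ x. emeasure (measure_pmf (f x)) X \<partial>M)"
    by (rule emeasure_bind_pmf)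
  also have "\<dots> = (\<integral>\<^sup>+ x. ennreal (measure_pmf.prob (f x) X) \<partial>M)"
    by (simp add: measure_pmf.emeasure_eq_measure)
  also have "\<dots> = ennreal (\<integral>x. measure_pmf.prob (f x) X \<partial>M)"
    by (intro nn_integral_eq_integral measure_pmf.integrable_const_bound[where B=1]) auto
  finally show ?thesis
    by (simp add: measure_pmf.emeasure_eq_measure integral_nonneg)
qed

lemma measure_bind_pmf_le:
  assumes "\<And>x. x \<in> set_pmf M \<Longrightarrow> x \<notin> A \<Longrightarrow> measure_pmf.prob (f x) X \<le> c" and "0 \<le> c"
  shows "measure_pmf.prob (bind_pmf M f) X \<le> measure_pmf.prob M A + c"
proof -
  have "measure_pmf.prob (bind_pmf M f) X \<le> (\<integral>x. indicator A x + c \<partial>M)"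
    unfolding measure_bind_pmf
  proof (rule integral_mono_AE)
    show "integrable (measure_pmf M) (\<lambda>x. measure_pmf.prob (f x) X)"
      by (intro measure_pmf.integrable_const_bound[where B=1]) auto
    show "integrable (measure_pmf M) (\<lambda>x. indicator A x + c)"
      by (intro measure_pmf.integrable_const_bound[where B="1+c"]) (auto simp: indicator_def assms(2))
    show "AE x in measure_pmf M. measure_pmf.prob (f x) X \<le> indicator A x + c"
      using assms by (intro AE_pmfI) (auto simp: indicator_def intro: order.trans[OF measure_pmf.prob_le_1])
  qed
  also have "\<dots> = measure_pmf.prob M A + c"
    by (subst Bochner_Integration.integral_add)
       (auto intro!: measure_pmf.integrable_const_bound[where B=1] simp: indicator_def)
  finally show ?thesis .
qed

lemma measure_bind_pmf_le_const:
  assumes "\<And>x. x \<in> set_pmf M \<Longrightarrow> measure_pmf.prob (f x) X \<le> c" and "0 \<le> c"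
  shows "measure_pmf.prob (bind_pmf M f) X \<le> c"
  using measure_bind_pmf_le[of M "{}" f X c] assms by auto

lemma bind_map_pair_pmf:
  "bind_pmf (map_pmf h (pair_pmf A B)) \<phi> = bind_pmf A (\<lambda>a. bind_pmf B (\<lambda>b. \<phi> (h (a, b))))"
  by (simp add: pair_pmf_def bind_map_pmf bind_assoc_pmf bind_return_pmf)

lemma measure_Pi_bernoulli_constant_on:
  assumes "finite A" "F \<subseteq> A" "0 \<le> p" "p \<le> 1"
  shows "measure_pmf.prob (Pi_pmf A False (\<lambda>_. bernoulli_pmf p)) {f. \<forall>e\<in>F. f e = c}
         = (if c then p else 1 - p) ^ card F"
proof -
  have "{f. \<forall>e\<in>F. f e = c} = Pi A (\<lambda>e. if e \<in> F then {c} else UNIV)"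
    using assms(2) by (auto simp: Pi_def)
  hence "measure_pmf.prob (Pi_pmf A False (\<lambda>_. bernoulli_pmf p)) {f. \<forall>e\<in>F. f e = c}
     = (\<Prod>e\<in>A. measure_pmf.prob (bernoulli_pmf p) (if e \<in> F then {c} else UNIV))"
    using assms by (simp add: measure_Pi_pmf_Pi)
  also have "\<dots> = (\<Prod>e\<in>A. if e \<in> F then (if c then p else 1 - p) else 1)"
    using assms by (intro prod.cong) (auto simp: measure_pmf_single)
  also have "\<dots> = (\<Prod>e\<in>A \<inter> F. (if c then p else 1 - p))"
    using assms(1) by (rule prod.inter_restrict[symmetric])
  also have "A \<inter> F = F" using assms by auto
  finally show ?thesis by simp
qed

lemma one_minus_power_le_exp:
  fixes p x :: real
  assumes "0 \<le> p" "p \<le> 1" "x \<le> p * c"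
  shows "(1 - p) ^ c \<le> exp (- x)"
proof -
  have "(1 - p) ^ c \<le> exp (- p) ^ c"
    using assms by (intro power_mono) (auto simp: exp_ge_add_one_self[of "-p", simplified])
  also have "\<dots> = exp (- p * c)" by (simp add: exp_of_nat_mult[symmetric] mult.commute)
  also have "\<dots> \<le> exp (- x)" using assms by simp
  finally show ?thesis .
qed

lemma binomial_le_self_power: "n choose r \<le> n ^ r"
  by (cases "r \<le> n") (auto simp: binomial_le_pow binomial_eq_0)

lemma finite_all_pairs: "finite V \<Longrightarrow> finite (all_pairs V)"
  by (rule finite_subset[of _ "Pow V"]) (auto simp: all_pairs_def)

lemma all_pairs_mono: "V \<subseteq> W \<Longrightarrow> all_pairs V \<subseteq> all_pairs W"
  unfolding all_pairs_def by blast

lemma doubleton_in_all_pairs_iff: "{a, b} \<in> all_pairs V \<longleftrightarrow> a \<in> V \<and> b \<in> V \<and> a \<noteq> b"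
  unfolding all_pairs_def by (auto simp: doubleton_eq_iff)

definition touching_pairs :: "nat set \<Rightarrow> nat set \<Rightarrow> nat set set" where
  "touching_pairs T B = {e \<in> all_pairs T. e \<inter> B \<noteq> {}}"

lemma card_touching_pairs_ge:
  assumes "finite T" "B \<subseteq> T" "card T = K + 1"
  shows "card B * K \<le> 2 * card (touching_pairs T B)"
proof -
  define b where "b = card B"
  define C1 where "C1 = (\<lambda>(a, x). {a, x}) ` (B \<times> (T - B))"
  define C2 where "C2 = {e. e \<subseteq> B \<and> card e = 2}"
  have finB: "finite B" using assms finite_subset by blast
  have "inj_on (\<lambda>(a, x). {a, x}) (B \<times> (T - B))"
    by (auto simp: inj_on_def doubleton_eq_iff)
  hence "card C1 = b * (K + 1 - b)"
    using assms finB by (simp add: C1_def b_def card_image card_cartesian_product card_Diff_subset)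
  moreover have "card C2 = b choose 2" unfolding C2_def b_def using n_subsets[OF finB] by simp
  moreover have "C1 \<inter> C2 = {}" unfolding C1_def C2_def by auto
  moreover have "C1 \<union> C2 \<subseteq> touching_pairs T B"
    using assms(2) by (auto simp: C1_def C2_def touching_pairs_def doubleton_in_all_pairs_iff card_2_iff)
  moreover have "finite (touching_pairs T B)"
    using finite_all_pairs[OF assms(1)] by (simp add: touching_pairs_def)
  ultimately have "b * (K + 1 - b) + (b choose 2) \<le> card (touching_pairs T B)"
    by (metis card_Un_disjoint card_mono finite_Un finite_subset)
  moreover have "b * K \<le> 2 * (b * (K + 1 - b) + (b choose 2))"
  proof -
    obtain r where r: "K + 1 = b + r"
      using card_mono[OF assms(1,2)] assms(3) le_Suc_ex unfolding b_def by auto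
    have "2 * (b choose 2) = b * (b - 1)"
      by (simp add: choose_two) (cases "even b"; auto simp: even_mult_iff)
    moreover have "b * K = b * (b - 1) + b * r"
      using r by (cases b) (auto simp: algebra_simps)
    ultimately show ?thesis using r by simp
  qed
  ultimately show ?thesis unfolding b_def by (meson le_trans mult_le_mono2)
qed

lemma prob_no_touching_edges_le:
  fixes n K :: nat and p :: real
  assumes p: "0 \<le> p" "p \<le> 1" and n: "1 \<le> n" and pK: "6 * ln n \<le> p * K"
    and T: "finite V" "T \<subseteq> V" "card T = K + 1" and "B \<subseteq> T"
  shows "measure_pmf.prob (Pi_pmf (all_pairs V) False (\<lambda>_. bernoulli_pmf p))
           {g. \<forall>e\<in>touching_pairs T B. g e = False} \<le> 1 / real n ^ (3 * card B)"
proof -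
  let ?t = "card (touching_pairs T B)"
  have "touching_pairs T B \<subseteq> all_pairs V"
    using all_pairs_mono[OF T(2)] by (auto simp: touching_pairs_def)
  hence "measure_pmf.prob (Pi_pmf (all_pairs V) False (\<lambda>_. bernoulli_pmf p))
           {g. \<forall>e\<in>touching_pairs T B. g e = False} = (1 - p) ^ ?t"
    using measure_Pi_bernoulli_constant_on[OF finite_all_pairs[OF T(1)] _ p, of _ False] by simp
  also have "\<dots> \<le> exp (- (real (3 * card B) * ln n))"
  proof (rule one_minus_power_le_exp[OF p])
    have "real (card B * K) \<le> 2 * real ?t"
      using card_touching_pairs_ge[OF finite_subset[OF T(2,1)] \<open>B \<subseteq> T\<close> T(3)] by linarith
    hence "real (card B) * (p * K) \<le> 2 * (p * ?t)"
      using p by (simp add: algebra_simps) (metis mult.assoc mult_left_mono)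
    moreover have "real (card B) * (6 * ln n) \<le> real (card B) * (p * K)"
      using pK by (intro mult_left_mono) auto
    ultimately show "real (3 * card B) * ln n \<le> p * ?t" by simp
  qed
  also have "\<dots> = 1 / real n ^ (3 * card B)"
  proof -
    have "exp (real (3 * card B) * ln n) = real n ^ (3 * card B)"
      using n by (simp only: exp_of_nat_mult) simp
    thus ?thesis by (metis exp_minus inverse_eq_divide)
  qed
  finally show ?thesis .
qed

lemma sum_split_subsets_le:
  assumes "finite I" "card I = K" "K + 1 \<le> n" "finite W" "card W \<le> n"
  shows "(\<Sum>b\<in>{1..K + 1}. real (card ({A. A \<subseteq> I \<and> card A = K + 1 - b} \<times> {B. B \<subseteq> W \<and> card B = b}))
            / real n ^ (3 * b)) \<le> 1 / n"
proof -
  have "real (card ({A. A \<subseteq> I \<and> card A = K + 1 - b} \<times> {B. B \<subseteq> W \<and> card B = b})) / real n ^ (3 * b)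
          \<le> 1 / real n ^ 2" if b: "b \<in> {1..K + 1}" for b
  proof -
    have "real n ^ (3 * b) = real n ^ ((b - 1) + b + (b + 1))"
      using b by (intro arg_cong[where f="power (real n)"]) auto
    hence pow: "real n ^ (3 * b) = real (n ^ (b - 1) * n ^ b) * real n ^ (b + 1)"
      by (simp only: power_add of_nat_mult of_nat_power)
    have "K choose (K + 1 - b) = K choose (b - 1)"
      using b by (subst binomial_symmetric) (auto simp: Suc_diff_le)
    also have "\<dots> \<le> n ^ (b - 1)"
      using binomial_le_self_power[of K "b - 1"] power_mono[of K n "b - 1"] assms(3) by linarith
    finally have "K choose (K + 1 - b) \<le> n ^ (b - 1)" .
    moreover have "card W choose b \<le> n ^ b"
      using binomial_le_self_power[of "card W" b] power_mono[of "card W" n b] assms(5) by linarith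
    ultimately have "(K choose (K + 1 - b)) * (card W choose b) \<le> n ^ (b - 1) * n ^ b"
      by (rule mult_le_mono)
    hence "card ({A. A \<subseteq> I \<and> card A = K + 1 - b} \<times> {B. B \<subseteq> W \<and> card B = b})
             \<le> n ^ (b - 1) * n ^ b"
      using assms by (simp add: card_cartesian_product n_subsets)
    hence "real (card ({A. A \<subseteq> I \<and> card A = K + 1 - b} \<times> {B. B \<subseteq> W \<and> card B = b}))
             \<le> real (n ^ (b - 1) * n ^ b)"
      by (simp only: of_nat_le_iff)
    hence "real (card ({A. A \<subseteq> I \<and> card A = K + 1 - b} \<times> {B. B \<subseteq> W \<and> card B = b})) / real n ^ (3 * b)
             \<le> real (n ^ (b - 1) * n ^ b) / real n ^ (3 * b)"
      by (rule divide_right_mono) simp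
    also have "\<dots> = 1 / real n ^ (b + 1)"
      unfolding pow using assms(3) by (simp del: of_nat_mult of_nat_power)
    also have "\<dots> \<le> 1 / real n ^ 2"
      using b assms(3) by (intro divide_left_mono power_increasing) auto
    finally show ?thesis .
  qed
  hence "(\<Sum>b\<in>{1..K + 1}. real (card ({A. A \<subseteq> I \<and> card A = K + 1 - b} \<times> {B. B \<subseteq> W \<and> card B = b}))
            / real n ^ (3 * b)) \<le> (\<Sum>b\<in>{1..K + 1}. 1 / real n ^ 2)"
    by (rule sum_mono)
  also have "\<dots> = real (K + 1) / real n ^ 2"
    by simp
  also have "\<dots> \<le> real n / real n ^ 2"
    using assms(3) by (intro divide_right_mono) auto
  also have "\<dots> = 1 / n"
    by (simp add: power2_eq_square)
  finally show ?thesis .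
qed

lemma indep_set_after_deleting_inside_no_touching_edges:
  assumes "indep_set ({e \<in> all_pairs V. g e} - {e. e \<subseteq> I}) T" "T \<subseteq> V"
    and "e \<in> touching_pairs T (T - I)"
  shows "\<not> g e"
proof -
  obtain a x where "e = {a, x}" "a \<in> T" "x \<in> T" "a \<noteq> x" "\<not> e \<subseteq> I"
    using assms(3) unfolding touching_pairs_def all_pairs_def by blast
  thus ?thesis
    using assms(1,2) unfolding indep_set_def by (auto simp: doubleton_in_all_pairs_iff)
qed
lemma prob_indep_set_after_deleting_inside_le:
  fixes n K :: nat and p :: real and V I :: "nat set"
  assumes p: "0 \<le> p" "p \<le> 1" and n: "1 \<le> n" and pK: "6 * ln n \<le> p * K" and Kn: "K + 1 \<le> n"
    and V: "V \<subseteq> {1..n}" and I: "I \<subseteq> V" "card I = K"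
  shows "measure_pmf.prob (Pi_pmf (all_pairs V) False (\<lambda>_. bernoulli_pmf p))
     {g. \<exists>T\<subseteq>V. card T = K + 1 \<and> indep_set ({e \<in> all_pairs V. g e} - {e. e \<subseteq> I}) T} \<le> 1 / n"
proof -
  let ?P = "Pi_pmf (all_pairs V) False (\<lambda>_. bernoulli_pmf p)"
  define Pa where "Pa b = {A. A \<subseteq> I \<and> card A = K + 1 - b} \<times> {B. B \<subseteq> V - I \<and> card B = b}" for b
  define J where "J = Sigma {1..K + 1} Pa"
  define Ev where "Ev j = {g. \<forall>e\<in>touching_pairs (fst (snd j) \<union> snd (snd j)) (snd (snd j)). g e = False}"
    for j :: "nat \<times> nat set \<times> nat set"
  have finV: "finite V" using V finite_subset by blast
  have finI: "finite I" using I finV finite_subset by blast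
  have finPa: "finite (Pa b)" for b
    unfolding Pa_def using finI finV by (intro finite_cartesian_product) auto
  have finJ: "finite J" unfolding J_def using finPa by auto
  \<comment> \<open>Union bound over the splits \<open>A = T \<inter> I\<close>, \<open>B = T - I\<close>; here \<open>B \<noteq> {}\<close> because \<open>card I = K\<close>.\<close>
  have "{g. \<exists>T\<subseteq>V. card T = K + 1 \<and> indep_set ({e \<in> all_pairs V. g e} - {e. e \<subseteq> I}) T}
    \<subseteq> (\<Union>j\<in>J. Ev j)"
  proof
    fix g assume "g \<in> {g. \<exists>T\<subseteq>V. card T = K + 1 \<and> indep_set ({e \<in> all_pairs V. g e} - {e. e \<subseteq> I}) T}"
    then obtain T where T: "T \<subseteq> V" "card T = K + 1"
      and indep: "indep_set ({e \<in> all_pairs V. g e} - {e. e \<subseteq> I}) T" by blast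
    have "card (T \<inter> I) + card (T - I) = K + 1"
      using T finite_subset[OF T(1) finV] by (metis card_Int_Diff)
    moreover have "card (T \<inter> I) \<le> K" using I card_mono[OF finI] by (metis inf_le2)
    ultimately have "(card (T - I), T \<inter> I, T - I) \<in> J"
      using T(1) by (auto simp: J_def Pa_def)
    moreover have "T \<inter> I \<union> (T - I) = T" by auto
    hence "g \<in> Ev (card (T - I), T \<inter> I, T - I)"
      using indep_set_after_deleting_inside_no_touching_edges[OF indep T(1)] by (auto simp: Ev_def)
    ultimately show "g \<in> (\<Union>j\<in>J. Ev j)" by blast
  qed
  hence "measure_pmf.prob ?P {g. \<exists>T\<subseteq>V. card T = K + 1 \<and> indep_set ({e \<in> all_pairs V. g e} - {e. e \<subseteq> I}) T}
      \<le> measure_pmf.prob ?P (\<Union>j\<in>J. Ev j)"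
    by (rule measure_pmf.finite_measure_mono) simp
  also have "\<dots> \<le> (\<Sum>j\<in>J. measure_pmf.prob ?P (Ev j))"
    using finJ by (rule measure_pmf.finite_measure_subadditive_finite) simp
  also have "\<dots> \<le> (\<Sum>j\<in>J. 1 / real n ^ (3 * fst j))"
  proof (rule sum_mono)
    fix j assume "j \<in> J"
    then obtain b A B where j: "j = (b, A, B)" "A \<subseteq> I" "B \<subseteq> V - I" "card B = b" "card A = K + 1 - b"
      "b \<le> K + 1" unfolding J_def Pa_def by auto
    have "card (A \<union> B) = K + 1"
      using j finite_subset[OF j(2) finI] finite_subset[OF j(3)] finV by (subst card_Un_disjoint) auto
    thus "measure_pmf.prob ?P (Ev j) \<le> 1 / real n ^ (3 * fst j)"
      using prob_no_touching_edges_le[OF p n pK finV, of "A \<union> B" B] j I by (auto simp: Ev_def)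
  qed
  also have "\<dots> = (\<Sum>b\<in>{1..K + 1}. real (card (Pa b)) / real n ^ (3 * b))"
    unfolding J_def using sum.Sigma[of "{1..K + 1}" Pa "\<lambda>b _. 1 / real n ^ (3 * b)"] finPa
    by (simp add: split_beta)
  also have "\<dots> \<le> 1 / n"
    unfolding Pa_def using finI I Kn finV card_mono[of "{1..n}" "V - I"] V
    by (intro sum_split_subsets_le) auto
  finally show ?thesis .
qed

lemma many_vertices_with_nbr:
  assumes "M \<subseteq> {1..n}" "card M \<le> m" "t + m + K \<le> n" "card (no_nbr_M n G M) < K"
  shows "\<exists>U \<phi>. U \<subseteq> {1..n} - M \<and> card U = t \<and> \<phi> \<in> U \<rightarrow>\<^sub>E M \<and> (\<forall>u\<in>U. {u, \<phi> u} \<in> G)"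
proof -
  have "card ({1..n} - M) = n - card M"
    using assms(1) finite_subset[OF assms(1)] by (simp add: card_Diff_subset)
  moreover have "card M \<le> n" using card_mono[OF _ assms(1)] by simp
  moreover have "card (({1..n} - M) - no_nbr_M n G M) = card ({1..n} - M) - card (no_nbr_M n G M)"
    by (intro card_Diff_subset) (auto simp: no_nbr_M_def intro: finite_subset)
  ultimately have "t \<le> card (({1..n} - M) - no_nbr_M n G M)"
    using assms(2-4) by linarith
  then obtain U where U: "U \<subseteq> ({1..n} - M) - no_nbr_M n G M" "card U = t"
    by (meson obtain_subset_with_card_n)
  have "\<exists>w. w \<in> M \<and> {u, w} \<in> G" if "u \<in> U" for u
    using U that by (auto simp: no_nbr_M_def)
  then obtain \<phi> where \<phi>: "\<And>u. u \<in> U \<Longrightarrow> \<phi> u \<in> M \<and> {u, \<phi> u} \<in> G" by metis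
  show ?thesis
    using U \<phi> by (intro exI[of _ U] exI[of _ "restrict \<phi> U"]) auto
qed

lemma card_subsets_with_choices_le:
  assumes "finite V" "finite M" "card V \<le> n" "card M \<le> m"
  shows "card (Sigma {U. U \<subseteq> V \<and> card U = t} (\<lambda>U. U \<rightarrow>\<^sub>E M)) \<le> 2 ^ n * m ^ t"
proof -
  have "card (Sigma {U. U \<subseteq> V \<and> card U = t} (\<lambda>U. U \<rightarrow>\<^sub>E M))
      = (\<Sum>U\<in>{U. U \<subseteq> V \<and> card U = t}. card (U \<rightarrow>\<^sub>E M))"
    using assms(1,2) by (intro card_SigmaI) (auto intro: finite_PiE finite_subset)
  also have "\<dots> = (\<Sum>U\<in>{U. U \<subseteq> V \<and> card U = t}. card M ^ t)"
    using assms(1) by (intro sum.cong refl) (auto simp: card_PiE finite_subset)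
  also have "\<dots> = (card V choose t) * card M ^ t"
    using n_subsets[OF assms(1)] by simp
  also have "\<dots> \<le> 2 ^ n * m ^ t"
  proof (intro mult_le_mono power_mono assms(4) zero_le)
    show "card V choose t \<le> 2 ^ n"
      using binomial_le_pow2[of "card V" t] power_increasing[of "card V" n "2::nat"] assms(3) by linarith
  qed
  finally show ?thesis .
qed

lemma prob_few_vertices_without_nbr_le:
  fixes n m K t :: nat and p :: real and M :: "nat set"
  defines "E1 \<equiv> all_pairs {1..n} - all_pairs ({1..n} - M)"
  assumes p: "0 \<le> p" "p \<le> 1" and M: "M \<subseteq> {1..n}" "card M \<le> m" and tK: "t + m + K \<le> n"
  shows "measure_pmf.prob (Pi_pmf E1 False (\<lambda>_. bernoulli_pmf p))
      {f. card (no_nbr_M n {e \<in> E1. f e} M) < K} \<le> 2 ^ n * (real m * p) ^ t"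
proof -
  let ?P = "Pi_pmf E1 False (\<lambda>_. bernoulli_pmf p)"
  define J where "J = Sigma {U. U \<subseteq> {1..n} - M \<and> card U = t} (\<lambda>U. U \<rightarrow>\<^sub>E M)"
  define Ev where "Ev j = {f. \<forall>e\<in>(\<lambda>u. {u, snd j u}) ` fst j. f e = True}"
    for j :: "nat set \<times> (nat \<Rightarrow> nat)"
  have finM: "finite M" using M finite_subset by blast
  have finE1: "finite E1" unfolding E1_def by (intro finite_Diff finite_all_pairs) auto
  have finJ: "finite J"
    unfolding J_def using finM by (intro finite_SigmaI finite_PiE) (auto intro: finite_subset)
  have "{f. card (no_nbr_M n {e \<in> E1. f e} M) < K} \<subseteq> (\<Union>j\<in>J. Ev j)"
  proof
    fix f assume "f \<in> {f. card (no_nbr_M n {e \<in> E1. f e} M) < K}"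
    then obtain U \<phi> where "U \<subseteq> {1..n} - M" "card U = t" "\<phi> \<in> U \<rightarrow>\<^sub>E M"
        "\<forall>u\<in>U. {u, \<phi> u} \<in> {e \<in> E1. f e}"
      using many_vertices_with_nbr[OF M tK] by blast
    hence "(U, \<phi>) \<in> J" "f \<in> Ev (U, \<phi>)" by (auto simp: J_def Ev_def)
    thus "f \<in> (\<Union>j\<in>J. Ev j)" by blast
  qed
  hence "measure_pmf.prob ?P {f. card (no_nbr_M n {e \<in> E1. f e} M) < K}
        \<le> measure_pmf.prob ?P (\<Union>j\<in>J. Ev j)"
    by (rule measure_pmf.finite_measure_mono) simp
  also have "\<dots> \<le> (\<Sum>j\<in>J. measure_pmf.prob ?P (Ev j))"
    using finJ by (rule measure_pmf.finite_measure_subadditive_finite) simp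
  also have "\<dots> = (\<Sum>j\<in>J. p ^ t)"
  proof (rule sum.cong[OF refl])
    fix j assume "j \<in> J"
    then obtain U \<phi> where j: "j = (U, \<phi>)" "U \<subseteq> {1..n} - M" "card U = t" "\<phi> \<in> U \<rightarrow>\<^sub>E M"
      unfolding J_def by auto
    have U: "u \<in> {1..n} - M" "\<phi> u \<in> M" if "u \<in> U" for u
      using j that PiE_mem[OF j(4) that] by auto
    hence sub: "(\<lambda>u. {u, \<phi> u}) ` U \<subseteq> E1"
      using M(1) unfolding E1_def by (fastforce simp: doubleton_in_all_pairs_iff)
    moreover have "inj_on (\<lambda>u. {u, \<phi> u}) U"
      using U by (auto simp: inj_on_def doubleton_eq_iff)
    ultimately show "measure_pmf.prob ?P (Ev j) = p ^ t"
      using measure_Pi_bernoulli_constant_on[OF finE1 sub p, of True] j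
      by (simp add: Ev_def card_image)
  qed
  also have "\<dots> = real (card J) * p ^ t" by simp
  also have "\<dots> \<le> (2 ^ n * real m ^ t) * p ^ t"
  proof (rule mult_right_mono)
    have "card J \<le> 2 ^ n * m ^ t"
      unfolding J_def using finM M card_mono[of "{1..n}" "{1..n} - M"]
      by (intro card_subsets_with_choices_le) auto
    hence "real (card J) \<le> real (2 ^ n * m ^ t)"
      by (simp only: of_nat_le_iff)
    thus "real (card J) \<le> 2 ^ n * real m ^ t" by simp
  qed (use p in auto)
  also have "\<dots> = 2 ^ n * (real m * p) ^ t" by (simp add: power_mult_distrib)
  finally show ?thesis .
qed

definition indep_sets_hit_planted :: "nat \<Rightarrow> nat \<Rightarrow> nat \<Rightarrow> (nat set set \<times> nat set) set" where
  "indep_sets_hit_planted n k k' =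
     {(E, M). \<forall>S. S \<subseteq> {1..n} \<and> card S = k \<and> indep_set E S \<longrightarrow> k' \<le> card (S \<inter> M)}"

definition plant_delete_pmf ::
  "nat \<Rightarrow> nat \<Rightarrow> nat \<Rightarrow> nat set set \<Rightarrow> nat \<Rightarrow> (nat \<Rightarrow> nat) \<Rightarrow> nat set set \<Rightarrow> (nat set set \<times> nat set) pmf"
where
  "plant_delete_pmf n k m H k' v G' =
     (let M = v ` {1..m};
          E = plant m H v G';
          R = no_nbr_M n E M
      in bind_pmf
           (if k - k' \<le> card R then pmf_of_set {S. S \<subseteq> R \<and> card S = k - k'}
            else pmf_of_set {S. S \<subseteq> {1..n} \<and> card S = k})
           (\<lambda>I. return_pmf (E - {e. e \<subseteq> I}, M)))"

lemma GH_eq_planting_first: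
  "GH n p k m H k' = bind_pmf (Pi_pmf {1..m} 0 (\<lambda>i. pmf_of_set (part n m i)))
     (\<lambda>v. bind_pmf (gnp n p) (plant_delete_pmf n k m H k' v))"
  unfolding GH_def plant_delete_pmf_def by (rule bind_commute_pmf)

lemma part_subset:
  assumes "m dvd n" "i \<in> {1..m}"
  shows "part n m i \<subseteq> {1..n}"
proof -
  have "i * (n div m) \<le> m * (n div m)" using assms(2) by simp
  thus ?thesis using assms(1) by (auto simp: part_def)
qed

lemma part_nonempty:
  assumes "0 < n" "m dvd n" "i \<in> {1..m}"
  shows "part n m i \<noteq> {}"
proof -
  have "0 < n div m" using assms(1,2) by (auto elim!: dvdE)
  hence "(i - 1) * (n div m) + 1 \<le> i * (n div m)"
    using assms(3) by (cases i) auto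
  thus ?thesis by (simp add: part_def)
qed

lemma planted_vertices_subset:
  assumes "0 < n" "m dvd n" "v \<in> set_pmf (Pi_pmf {1..m} 0 (\<lambda>i. pmf_of_set (part n m i)))"
  shows "v ` {1..m} \<subseteq> {1..n}"
proof
  fix u assume "u \<in> v ` {1..m}"
  then obtain i where i: "i \<in> {1..m}" "u = v i" by blast
  have "v i \<in> set_pmf (pmf_of_set (part n m i))"
    using assms(3) i by (auto simp: set_Pi_pmf PiE_dflt_def)
  thus "u \<in> {1..n}"
    using part_subset[OF assms(2) i(1)] part_nonempty[OF assms(1,2) i(1)] i
    by (auto simp: part_def)
qed

lemma gnp_split:
  fixes n :: nat and M :: "nat set"
  defines "E2 \<equiv> all_pairs ({1..n} - M)"
  defines "E1 \<equiv> all_pairs {1..n} - E2"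
  shows "gnp n p = map_pmf (\<lambda>(f, g). {e \<in> E1. f e} \<union> {e \<in> E2. g e})
           (pair_pmf (Pi_pmf E1 False (\<lambda>_. bernoulli_pmf p)) (Pi_pmf E2 False (\<lambda>_. bernoulli_pmf p)))"
proof -
  have sub: "E2 \<subseteq> all_pairs {1..n}" unfolding E2_def by (intro all_pairs_mono) auto
  have fin1: "finite E1" unfolding E1_def by (intro finite_Diff finite_all_pairs) auto
  have fin2: "finite E2" unfolding E2_def by (intro finite_all_pairs) auto
  have eq: "all_pairs {1..n} = E1 \<union> E2" using sub unfolding E1_def by auto
  have "gnp n p = map_pmf (\<lambda>f. {e \<in> all_pairs {1..n}. f e}) (Pi_pmf (E1 \<union> E2) False (\<lambda>_. bernoulli_pmf p))"
    unfolding gnp_def eq ..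
  also have "Pi_pmf (E1 \<union> E2) False (\<lambda>_. bernoulli_pmf p) = map_pmf (\<lambda>(f, g) x. if x \<in> E1 then f x else g x)
             (pair_pmf (Pi_pmf E1 False (\<lambda>_. bernoulli_pmf p)) (Pi_pmf E2 False (\<lambda>_. bernoulli_pmf p)))"
    using fin1 fin2 by (intro Pi_pmf_union) (auto simp: E1_def)
  also have "map_pmf (\<lambda>f. {e \<in> all_pairs {1..n}. f e}) (map_pmf (\<lambda>(f, g) x. if x \<in> E1 then f x else g x)
             (pair_pmf (Pi_pmf E1 False (\<lambda>_. bernoulli_pmf p)) (Pi_pmf E2 False (\<lambda>_. bernoulli_pmf p))))
     = map_pmf (\<lambda>(f, g). {e \<in> E1. f e} \<union> {e \<in> E2. g e})
           (pair_pmf (Pi_pmf E1 False (\<lambda>_. bernoulli_pmf p)) (Pi_pmf E2 False (\<lambda>_. bernoulli_pmf p)))"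
    unfolding map_pmf_comp
    using sub by (intro map_pmf_cong refl) (auto simp: eq E1_def)
  finally show ?thesis .
qed

lemma no_nbr_M_plant_union:
  assumes "M = v ` {1..m}" "G2 \<subseteq> all_pairs ({1..n} - M)" "is_graph_on {1..m} H"
  shows "no_nbr_M n (plant m H v (G1 \<union> G2)) M = no_nbr_M n G1 M"
proof -
  have "{u, w} \<in> plant m H v (G1 \<union> G2) \<longleftrightarrow> {u, w} \<in> G1" if "u \<notin> M" "w \<in> M" for u w
  proof -
    have "{u, w} \<notin> (\<lambda>e. v ` e) ` H"
    proof
      assume "{u, w} \<in> (\<lambda>e. v ` e) ` H"
      then obtain e where "e \<in> H" "{u, w} = v ` e" by auto
      moreover have "e \<subseteq> {1..m}"
        using \<open>e \<in> H\<close> assms(3) unfolding is_graph_on_def all_pairs_def by auto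
      ultimately show False using that assms(1) by auto
    qed
    moreover have "{u, w} \<notin> G2"
      using assms(2) that by (auto simp: doubleton_in_all_pairs_iff dest!: subsetD)
    moreover have "\<not> {u, w} \<subseteq> v ` {1..m}" using that assms(1) by auto
    ultimately show ?thesis unfolding plant_def by auto
  qed
  thus ?thesis unfolding no_nbr_M_def by auto
qed

lemma indep_set_outside_if_miss_planted:
  assumes M: "M = v ` {1..m}" and G2: "G2 \<subseteq> all_pairs ({1..n} - M)" and "k' \<le> k"
    and miss: "(plant m H v (G1 \<union> G2) - {e. e \<subseteq> I}, M) \<notin> indep_sets_hit_planted n k k'"
  shows "\<exists>T\<subseteq>{1..n} - M. card T = k - k' + 1 \<and> indep_set (G2 - {e. e \<subseteq> I}) T"
proof -
  obtain S where S: "S \<subseteq> {1..n}" "card S = k" "card (S \<inter> M) < k'"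
    and indep: "indep_set (plant m H v (G1 \<union> G2) - {e. e \<subseteq> I}) S"
    using miss by (auto simp: indep_sets_hit_planted_def)
  have "card S = card (S \<inter> M) + card (S - M)"
    using finite_subset[OF S(1)] by (simp add: card_Int_Diff)
  hence "k - k' + 1 \<le> card (S - M)" using S \<open>k' \<le> k\<close> by linarith
  then obtain T where T: "T \<subseteq> S - M" "card T = k - k' + 1"
    by (meson obtain_subset_with_card_n)
  have "{a, b} \<notin> G2 - {e. e \<subseteq> I}" if "a \<in> T" "b \<in> T" for a b
  proof
    assume "{a, b} \<in> G2 - {e. e \<subseteq> I}"
    moreover have "\<not> {a, b} \<subseteq> v ` {1..m}" using that T M by auto
    ultimately have "{a, b} \<in> plant m H v (G1 \<union> G2) - {e. e \<subseteq> I}"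
      unfolding plant_def by auto
    thus False using indep that T unfolding indep_set_def by blast
  qed
  thus ?thesis using T S(1) unfolding indep_set_def by (intro exI[of _ T]) auto
qed

lemma prob_miss_planted_given_cross_edges_le:
  fixes n m k k' :: nat and p :: real and v :: "nat \<Rightarrow> nat"
  defines "M \<equiv> v ` {1..m}"
  defines "V \<equiv> {1..n} - M"
  assumes p: "0 \<le> p" "p \<le> 1" and n: "1 \<le> n" and H: "is_graph_on {1..m} H" and kk: "k' \<le> k"
    and pK: "6 * ln n \<le> p * (k - k')" and Kn: "k - k' + 1 \<le> n"
    and R: "k - k' \<le> card (no_nbr_M n G1 M)"
  shows "measure_pmf.prob (bind_pmf (Pi_pmf (all_pairs V) False (\<lambda>_. bernoulli_pmf p))
            (\<lambda>g. plant_delete_pmf n k m H k' v (G1 \<union> {e \<in> all_pairs V. g e})))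
          (- indep_sets_hit_planted n k k') \<le> 1 / n"
proof -
  let ?B = "Pi_pmf (all_pairs V) False (\<lambda>_. bernoulli_pmf p)"
  define Is where "Is = {S. S \<subseteq> no_nbr_M n G1 M \<and> card S = k - k'}"
  define X where "X I g = (plant m H v (G1 \<union> {e \<in> all_pairs V. g e}) - {e. e \<subseteq> I}, M)" for I g
  define Bad where "Bad I = {g. \<exists>T\<subseteq>V. card T = k - k' + 1
                               \<and> indep_set ({e \<in> all_pairs V. g e} - {e. e \<subseteq> I}) T}" for I
  have "plant_delete_pmf n k m H k' v (G1 \<union> {e \<in> all_pairs V. g e})
      = bind_pmf (pmf_of_set Is) (\<lambda>I. return_pmf (X I g))" for g
    using no_nbr_M_plant_union[of M v m "{e \<in> all_pairs V. g e}" n H G1] R H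
    by (simp add: plant_delete_pmf_def Is_def X_def M_def V_def Let_def)
  hence "bind_pmf ?B (\<lambda>g. plant_delete_pmf n k m H k' v (G1 \<union> {e \<in> all_pairs V. g e}))
      = bind_pmf (pmf_of_set Is) (\<lambda>I. map_pmf (X I) ?B)"
    by (simp add: map_pmf_def bind_commute_pmf[of ?B])
  also have "measure_pmf.prob \<dots> (- indep_sets_hit_planted n k k') \<le> 1 / n"
  proof (rule measure_bind_pmf_le_const)
    fix I assume "I \<in> set_pmf (pmf_of_set Is)"
    moreover have "Is \<noteq> {}" "finite Is"
      using R by (auto simp: Is_def no_nbr_M_def intro: obtain_subset_with_card_n)
    ultimately have I: "I \<subseteq> V" "card I = k - k'"
      by (auto simp: Is_def no_nbr_M_def V_def)
    have "X I -` (- indep_sets_hit_planted n k k') \<subseteq> Bad I"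
    proof
      fix g assume "g \<in> X I -` (- indep_sets_hit_planted n k k')"
      moreover have "{e \<in> all_pairs V. g e} \<subseteq> all_pairs ({1..n} - M)"
        unfolding V_def by blast
      ultimately show "g \<in> Bad I"
        using indep_set_outside_if_miss_planted[OF M_def[THEN meta_eq_to_obj_eq] _ kk]
        by (simp add: X_def Bad_def V_def)
    qed
    hence "measure_pmf.prob (map_pmf (X I) ?B) (- indep_sets_hit_planted n k k')
        \<le> measure_pmf.prob ?B (Bad I)"
      by (simp add: measure_pmf.finite_measure_mono)
    also have "\<dots> \<le> 1 / n"
      unfolding Bad_def
      by (rule prob_indep_set_after_deleting_inside_le[OF p n pK Kn _ I]) (auto simp: V_def)
    finally show "measure_pmf.prob (map_pmf (X I) ?B) (- indep_sets_hit_planted n k k') \<le> 1 / n" .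
  qed simp
  finally show ?thesis .
qed

lemma prob_miss_planted_given_planting_le:
  fixes n m k k' t :: nat and p :: real and v :: "nat \<Rightarrow> nat"
  assumes p: "0 \<le> p" "p \<le> 1" and n: "1 \<le> n" and H: "is_graph_on {1..m} H" and kk: "k' \<le> k"
    and pK: "6 * ln n \<le> p * (k - k')" and Kn: "k - k' + 1 \<le> n"
    and v: "v ` {1..m} \<subseteq> {1..n}" and tK: "t + m + (k - k') \<le> n"
  shows "measure_pmf.prob (bind_pmf (gnp n p) (plant_delete_pmf n k m H k' v))
           (- indep_sets_hit_planted n k k') \<le> 2 ^ n * (real m * p) ^ t + 1 / n"
proof -
  define M where "M = v ` {1..m}"
  define V where "V = {1..n} - M"
  define E1 where "E1 = all_pairs {1..n} - all_pairs V"
  let ?B1 = "Pi_pmf E1 False (\<lambda>_. bernoulli_pmf p)"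
  let ?B2 = "Pi_pmf (all_pairs V) False (\<lambda>_. bernoulli_pmf p)"
  have "bind_pmf (gnp n p) (plant_delete_pmf n k m H k' v)
      = bind_pmf ?B1 (\<lambda>f. bind_pmf ?B2 (\<lambda>g.
          plant_delete_pmf n k m H k' v ({e \<in> E1. f e} \<union> {e \<in> all_pairs V. g e})))"
    unfolding gnp_split[of n p M] bind_map_pair_pmf E1_def V_def by (simp only: prod.case)
  also have "measure_pmf.prob \<dots> (- indep_sets_hit_planted n k k')
      \<le> measure_pmf.prob ?B1 {f. card (no_nbr_M n {e \<in> E1. f e} M) < k - k'} + 1 / n"
  proof (rule measure_bind_pmf_le)
    fix f assume "f \<notin> {f. card (no_nbr_M n {e \<in> E1. f e} M) < k - k'}"
    hence "k - k' \<le> card (no_nbr_M n {e \<in> E1. f e} (v ` {1..m}))" by (simp add: M_def)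
    from prob_miss_planted_given_cross_edges_le[OF p n H kk pK Kn this]
    show "measure_pmf.prob (bind_pmf ?B2 (\<lambda>g.
          plant_delete_pmf n k m H k' v ({e \<in> E1. f e} \<union> {e \<in> all_pairs V. g e})))
          (- indep_sets_hit_planted n k k') \<le> 1 / n"
      by (simp add: M_def V_def)
  qed simp
  also have "measure_pmf.prob ?B1 {f. card (no_nbr_M n {e \<in> E1. f e} M) < k - k'}
      \<le> 2 ^ n * (real m * p) ^ t"
    unfolding E1_def V_def
    by (rule prob_few_vertices_without_nbr_le[OF p _ _ tK])
       (use v card_image_le[of "{1..m}" v] in \<open>auto simp: M_def\<close>)
  finally show ?thesis by simp
qed

lemma two_power_mult_power_div4_le:
  fixes x :: real
  assumes "0 \<le> x" "x \<le> 1 / 4096" "12 \<le> n"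
  shows "2 ^ n * x ^ (n div 4) \<le> 1 / n"
proof -
  have "2 * n \<le> 12 * (n div 4)" using assms(3) by presburger
  hence pow: "(2::real) ^ (2 * n) \<le> 2 ^ (12 * (n div 4))" by (rule power_increasing) simp
  have "x ^ (n div 4) \<le> (1 / 2 ^ 12) ^ (n div 4)"
    using assms(1,2) by (intro power_mono) auto
  also have "\<dots> = 1 / 2 ^ (12 * (n div 4))"
    by (simp only: power_one_over power_mult)
  also have "\<dots> \<le> 1 / 2 ^ (2 * n)"
    using pow by (rule divide_left_mono) simp_all
  finally have "2 ^ n * x ^ (n div 4) \<le> 2 ^ n * (1 / 2 ^ (2 * n))"
    by (rule mult_left_mono) simp
  also have "\<dots> = 1 / 2 ^ n"
    by (simp add: mult_2 power_add)
  also have "\<dots> \<le> 1 / n"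
    using assms(3) of_nat_less_two_power[of n, where 'a=real] by (intro divide_left_mono) auto
  finally show ?thesis .
qed

theorem prob_GH_indep_sets_hit_planted_ge:
  fixes n m k k' :: nat and p :: real
  assumes p: "0 \<le> p" "p \<le> 1" and n: "0 < n" and m: "m dvd n" "12 * m \<le> n" "real m * p \<le> 1 / 4096"
    and H: "is_graph_on {1..m} H"
    and pK: "6 * ln n \<le> p * (real k - real k')" and Kn: "real k - real k' \<le> 2 * real n / 3"
  shows "1 - 2 / n \<le> measure_pmf.prob (GH n p k m H k') (indep_sets_hit_planted n k k')"
proof -
  have "0 < m" using m(1) n by (auto intro!: Nat.gr0I)
  hence n12: "12 \<le> n" using m(2) by linarith
  hence "0 < ln (real n)" by simp
  hence "0 < p * (real k - real k')" using pK by linarith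
  hence "real k' < real k" using p by (simp add: zero_less_mult_iff)
  hence kk: "k' \<le> k" by simp
  hence K: "real (k - k') = real k - real k'" by simp
  have big: "2 ^ n * (real m * p) ^ (n div 4) \<le> 1 / n"
    using p m(3) n12 by (intro two_power_mult_power_div4_le) auto
  have tK: "n div 4 + m + (k - k') \<le> n" and Kn': "k - k' + 1 \<le> n"
    using Kn m(2) n12 unfolding K[symmetric] by linarith+
  have "measure_pmf.prob (GH n p k m H k') (- indep_sets_hit_planted n k k') \<le> 2 / n"
    unfolding GH_eq_planting_first
  proof (rule measure_bind_pmf_le_const)
    fix v assume "v \<in> set_pmf (Pi_pmf {1..m} 0 (\<lambda>i. pmf_of_set (part n m i)))"
    hence "v ` {1..m} \<subseteq> {1..n}" by (rule planted_vertices_subset[OF n m(1)])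
    hence "measure_pmf.prob (bind_pmf (gnp n p) (plant_delete_pmf n k m H k' v))
             (- indep_sets_hit_planted n k k') \<le> 2 ^ n * (real m * p) ^ (n div 4) + 1 / n"
      using n by (intro prob_miss_planted_given_planting_le[OF p _ H kk pK[folded K] Kn' _ tK]) auto
    thus "measure_pmf.prob (bind_pmf (gnp n p) (plant_delete_pmf n k m H k' v))
             (- indep_sets_hit_planted n k k') \<le> 2 / n"
      using big by simp
  qed simp
  moreover have "measure_pmf.prob (GH n p k m H k') (- indep_sets_hit_planted n k k')
      = 1 - measure_pmf.prob (GH n p k m H k') (indep_sets_hit_planted n k k')"
    using measure_pmf.prob_compl[of "indep_sets_hit_planted n k k'"] by (simp add: Compl_eq_Diff_UNIV)
  ultimately show ?thesis by linarith
qed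

theorem corollaryC2:
  fixes \<delta> \<rho> :: real
  assumes "0 < \<delta>" "\<delta> < 1" "0 < \<rho>" "\<rho> < (1 - \<delta>) / 2"
  shows "\<exists>N::nat. \<forall>n \<ge> N. \<forall>m k k' :: nat. \<forall>H :: nat set set.
           real m = real n powr \<rho> \<longrightarrow> m dvd n \<longrightarrow> is_graph_on {1..m} H \<longrightarrow>
           k' \<le> m \<longrightarrow>
           6 * real n powr (1 - \<delta>) * ln (real n) \<le> real k - real k' \<longrightarrow>
           real k - real k' \<le> 2 * real n / 3 \<longrightarrow>
           measure_pmf.prob (GH n (real n powr (\<delta> - 1)) k m H k')
             {(E, M). \<forall>S. S \<subseteq> {1..n} \<and> card S = k \<and> indep_set E S \<longrightarrow> k' \<le> card (S \<inter> M)}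
           \<ge> 1 - 4 / real n"
proof -
  have "\<forall>\<^sub>F n in sequentially. 0 < n \<and> 12 * real n powr \<rho> \<le> real n
                                \<and> real n powr (\<rho> + \<delta> - 1) \<le> 1 / 4096"
    using assms by (intro eventually_conj eventually_gt_at_top) real_asymp+
  then obtain N where N: "\<And>n. N \<le> n \<Longrightarrow> 0 < n \<and> 12 * real n powr \<rho> \<le> real n
                                \<and> real n powr (\<rho> + \<delta> - 1) \<le> 1 / 4096"
    by (auto simp: eventually_sequentially)
  show ?thesis
  proof (intro exI[of _ N] allI impI)
    fix n m k k' :: nat and H :: "nat set set"
    let ?p = "real n powr (\<delta> - 1)"
    assume "N \<le> n" and m: "real m = real n powr \<rho>" "m dvd n" and H: "is_graph_on {1..m} H"
      and "k' \<le> m" and lo: "6 * real n powr (1 - \<delta>) * ln n \<le> real k - real k'"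
      and hi: "real k - real k' \<le> 2 * real n / 3"
    have n: "0 < n" "12 * m \<le> n" "real m * ?p \<le> 1 / 4096"
      using N[OF \<open>N \<le> n\<close>] m(1) by (simp_all add: powr_add[symmetric] add_diff_eq)
    have "?p \<le> real n powr 0" using n assms by (intro powr_mono) auto
    hence p: "0 \<le> ?p" "?p \<le> 1" using n by auto
    have "6 * ln n = ?p * (6 * real n powr (1 - \<delta>) * ln n)"
      using n by (simp add: powr_add[symmetric])
    also have "\<dots> \<le> ?p * (real k - real k')" using lo p by (intro mult_left_mono)
    finally have "1 - 2 / n \<le> measure_pmf.prob (GH n ?p k m H k') (indep_sets_hit_planted n k k')"
      using p n m(2) H hi by (intro prob_GH_indep_sets_hit_planted_ge)
    moreover have "2 / real n \<le> 4 / real n" using n by (simp add: divide_right_mono)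
    ultimately show "1 - 4 / n \<le> measure_pmf.prob (GH n ?p k m H k')
             {(E, M). \<forall>S. S \<subseteq> {1..n} \<and> card S = k \<and> indep_set E S \<longrightarrow> k' \<le> card (S \<inter> M)}"
      unfolding indep_sets_hit_planted_def by linarith
  qed
qed

end
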